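(* Let $P$ and $Q$ be projections in a von Neumann algebra $\mathcal{M}$. Then for every $T\in P\mathcal{M}Q$ and every $\varepsilon>0$ there exists $Y\in P\mathcal{M}Q$ such that $\|T-Y\|<\varepsilon$ and $C_Y=C_PC_Q$.
   Context: For an operator $T$ in a von Neumann algebra $\mathcal{M}$, the central support $C_T$ is the smallest central projection $Z$ of $\mathcal{M}$ with $ZT=T$. *)

theory Defs
  imports "HOL-Analysis.Analysis"
begin

text \<open>A complex Hilbert space: a real Banach space equipped with a complex scalar
  multiplication extending the real one and a complex inner product
  (linear in the second argument, conjugate-symmetric) inducing the norm.\<close>

class chilbert = banach +
  fixes scaleC :: "complex \<Rightarrow> 'a \<Rightarrow> 'a"
    and cinner :: "'a \<Rightarrow> 'a \<Rightarrow> complex"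
  assumes scaleC_add_right: "scaleC c (x + y) = scaleC c x + scaleC c y"
    and scaleC_add_left: "scaleC (c + d) x = scaleC c x + scaleC d x"
    and scaleC_scaleC: "scaleC c (scaleC d x) = scaleC (c * d) x"
    and scaleC_one: "scaleC 1 x = x"
    and scaleR_scaleC: "scaleR r x = scaleC (complex_of_real r) x"
    and cinner_add_right: "cinner x (y + z) = cinner x y + cinner x z"
    and cinner_scaleC_right: "cinner x (scaleC c y) = c * cinner x y"
    and cinner_commute: "cinner y x = cnj (cinner x y)"
    and norm_cinner: "norm x = sqrt (Re (cinner x x))"

definition bounded_clinear :: "('a::chilbert \<Rightarrow> 'a) \<Rightarrow> bool" where
  "bounded_clinear T \<longleftrightarrow> bounded_linear T \<and> (\<forall>c x. T (scaleC c x) = scaleC c (T x))"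

definition adj :: "('a::chilbert \<Rightarrow> 'a) \<Rightarrow> ('a \<Rightarrow> 'a)" where
  "adj T = (SOME S. \<forall>x y. cinner (T x) y = cinner x (S y))"

definition commutant :: "('a::chilbert \<Rightarrow> 'a) set \<Rightarrow> ('a \<Rightarrow> 'a) set" where
  "commutant S = {T. bounded_clinear T \<and> (\<forall>A\<in>S. T \<circ> A = A \<circ> T)}"

text \<open>Von Neumann algebra: a self-adjoint set of bounded operators equal to its
  double commutant (equivalently, a unital weakly closed *-subalgebra).\<close>
definition von_neumann_algebra :: "('a::chilbert \<Rightarrow> 'a) set \<Rightarrow> bool" where
  "von_neumann_algebra M \<longleftrightarrow>
     M \<subseteq> {T. bounded_clinear T} \<and> (\<forall>T\<in>M. adj T \<in> M) \<and> commutant (commutant M) = M"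

definition is_projection :: "('a::chilbert \<Rightarrow> 'a) set \<Rightarrow> ('a \<Rightarrow> 'a) \<Rightarrow> bool" where
  "is_projection M P \<longleftrightarrow> P \<in> M \<and> P \<circ> P = P \<and> adj P = P"

definition central_projection :: "('a::chilbert \<Rightarrow> 'a) set \<Rightarrow> ('a \<Rightarrow> 'a) \<Rightarrow> bool" where
  "central_projection M Z \<longleftrightarrow> is_projection M Z \<and> Z \<in> commutant M"

text \<open>Central support: the smallest central projection Z with Z T = T
  (order of projections: Z \<le> Z' iff Z Z' = Z).\<close>
definition central_support :: "('a::chilbert \<Rightarrow> 'a) set \<Rightarrow> ('a \<Rightarrow> 'a) \<Rightarrow> ('a \<Rightarrow> 'a)" where
  "central_support M T = (THE Z. central_projection M Z \<and> Z \<circ> T = T \<and>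
      (\<forall>Z'. central_projection M Z' \<and> Z' \<circ> T = T \<longrightarrow> Z \<circ> Z' = Z))"

definition corner :: "('a::chilbert \<Rightarrow> 'a) \<Rightarrow> ('a \<Rightarrow> 'a) set \<Rightarrow> ('a \<Rightarrow> 'a) \<Rightarrow> ('a \<Rightarrow> 'a) set" where
  "corner P M Q = {P \<circ> X \<circ> Q | X. X \<in> M}"

end

theory Submission
  imports Defs
begin

(*
  Choose by Zorn's lemma a maximal family F of contractions S in P M Q whose central
  supports are pairwise orthogonal and orthogonal to C_T.  As the S live in orthogonal
  central summands, Y0 = sum of all S in F converges strongly to a contraction in P M Q
  with C_S Y0 = S for S in F and C_T Y0 = 0.  Put Y = T + delta Y0 with 0 < delta < epsilon.
  Then C_Y <= C_P C_Q, and the central projection G = C_P C_Q (1 - C_Y) annihilates T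
  and every S in F.  A central projection annihilating P M Q annihilates C_P C_Q, so if G
  were nonzero then G P X Q would be nonzero for some X in M, and a normalisation of it
  could be added to F, contradicting maximality.  Hence C_Y = C_P C_Q.
*)

section \<open>Complex inner product spaces\<close>

lemma scaleC_zero_right [simp]: "scaleC c (0::'a::chilbert) = 0"
  by (metis add_cancel_right_right scaleC_add_right)

lemma scaleC_minus_right: "scaleC c (- (x::'a::chilbert)) = - scaleC c x"
  by (metis add.right_inverse add_eq_0_iff scaleC_add_right scaleC_zero_right)

lemma scaleC_diff_right: "scaleC c ((x::'a::chilbert) - y) = scaleC c x - scaleC c y"
  by (metis diff_conv_add_uminus scaleC_add_right scaleC_minus_right)

lemma cinner_add_left: "cinner ((x::'a::chilbert) + y) z = cinner x z + cinner y z"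
  by (metis cinner_add_right cinner_commute complex_cnj_add)

lemma cinner_scaleC_left: "cinner (scaleC c (x::'a::chilbert)) y = cnj c * cinner x y"
  by (metis cinner_commute cinner_scaleC_right complex_cnj_mult)

lemma cinner_zero_right [simp]: "cinner (x::'a::chilbert) 0 = 0"
  by (metis add_cancel_right_right cinner_add_right)

lemma cinner_zero_left [simp]: "cinner 0 (x::'a::chilbert) = 0"
  by (metis add_cancel_right_right cinner_add_left)

lemma cinner_minus_right: "cinner (x::'a::chilbert) (- y) = - cinner x y"
  by (metis add.right_inverse add_eq_0_iff cinner_add_right cinner_zero_right)

lemma cinner_minus_left: "cinner (- (x::'a::chilbert)) y = - cinner x y"
  by (metis add.right_inverse add_eq_0_iff cinner_add_left cinner_zero_left)

lemma cinner_diff_right: "cinner (x::'a::chilbert) (y - z) = cinner x y - cinner x z"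
  by (simp only: diff_conv_add_uminus cinner_add_right cinner_minus_right)

lemma cinner_diff_left: "cinner ((x::'a::chilbert) - y) z = cinner x z - cinner y z"
  by (simp only: diff_conv_add_uminus cinner_add_left cinner_minus_left)

lemma cinner_sum_right: "cinner (x::'a::chilbert) (sum f A) = (\<Sum>i\<in>A. cinner x (f i))"
  by (induction A rule: infinite_finite_induct) (auto simp: cinner_add_right)

lemma cinner_sum_left: "cinner (sum (f::_ \<Rightarrow> 'a::chilbert) A) y = (\<Sum>i\<in>A. cinner (f i) y)"
  by (induction A rule: infinite_finite_induct) (auto simp: cinner_add_left)

lemma cinner_scaleR_right: "cinner (x::'a::chilbert) (scaleR r y) = of_real r * cinner x y"
  by (simp add: scaleR_scaleC cinner_scaleC_right)

lemma cinner_scaleR_left: "cinner (scaleR r (x::'a::chilbert)) y = of_real r * cinner x y"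
  by (simp add: scaleR_scaleC cinner_scaleC_left)

lemma cinner_self: "cinner (x::'a::chilbert) x = complex_of_real ((norm x)\<^sup>2)"
proof -
  have norm_x: "norm x = sqrt (Re (cinner x x))" by (rule norm_cinner)
  have "Re (cinner x x) \<ge> 0"
  proof (rule ccontr)
    assume "\<not> Re (cinner x x) \<ge> 0"
    then have "sqrt (Re (cinner x x)) < 0" by simp
    with norm_x show False by (metis norm_ge_zero not_le)
  qed
  then have "(norm x)\<^sup>2 = Re (cinner x x)" using norm_x by simp
  moreover have "Im (cinner x x) = 0" by (metis cinner_commute cnj.sel(2) neg_equal_zero)
  ultimately show ?thesis by (simp add: complex_eq_iff)
qed

lemma Re_cinner_self: "Re (cinner (x::'a::chilbert) x) = (norm x)\<^sup>2"
  by (simp add: cinner_self)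

lemma cinner_self_eq_0 [simp]: "cinner (x::'a::chilbert) x = 0 \<longleftrightarrow> x = 0"
  by (simp add: cinner_self)

lemma cinner_right_eqI:
  assumes "\<And>z. cinner z (x::'a::chilbert) = cinner z y" shows "x = y"
proof -
  have "cinner (x - y) (x - y) = 0" using assms by (simp add: cinner_diff_right)
  then show ?thesis by simp
qed

lemma norm_scaleC: "norm (scaleC c (x::'a::chilbert)) = cmod c * norm x"
proof -
  have "(norm (scaleC c x))\<^sup>2 = Re (cnj c * c * cinner x x)"
    by (metis Re_cinner_self cinner_scaleC_left cinner_scaleC_right mult.assoc mult.commute)
  also have "cnj c * c = complex_of_real ((cmod c)\<^sup>2)" by (metis complex_norm_square mult.commute)
  finally have "(norm (scaleC c x))\<^sup>2 = (cmod c * norm x)\<^sup>2"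
    by (simp add: cinner_self power_mult_distrib)
  then show ?thesis by simp
qed

lemma power2_norm_add:
  "(norm ((x::'a::chilbert) + y))\<^sup>2 = (norm x)\<^sup>2 + (norm y)\<^sup>2 + 2 * Re (cinner x y)"
proof -
  have "Re (cinner y x) = Re (cinner x y)" by (metis cinner_commute cnj.sel(1))
  then show ?thesis
    by (simp add: Re_cinner_self[symmetric] cinner_add_left cinner_add_right)
qed

lemma power2_norm_diff:
  "(norm ((x::'a::chilbert) - y))\<^sup>2 = (norm x)\<^sup>2 + (norm y)\<^sup>2 - 2 * Re (cinner x y)"
  using power2_norm_add[of x "-y"] by (simp add: cinner_minus_right)

lemma pythagoras:
  "cinner (x::'a::chilbert) y = 0 \<Longrightarrow> (norm (x + y))\<^sup>2 = (norm x)\<^sup>2 + (norm y)\<^sup>2"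
  by (simp add: power2_norm_add)

lemma pythagoras_sum:
  fixes f :: "'i \<Rightarrow> 'a::chilbert"
  assumes "finite H" and "\<And>i j. i \<in> H \<Longrightarrow> j \<in> H \<Longrightarrow> i \<noteq> j \<Longrightarrow> cinner (f i) (f j) = 0"
  shows "(norm (sum f H))\<^sup>2 = (\<Sum>i\<in>H. (norm (f i))\<^sup>2)"
  using assms
proof (induction H rule: finite_induct)
  case (insert a H)
  have "cinner (f a) (sum f H) = 0"
    using insert.prems insert.hyps by (auto simp: cinner_sum_right intro!: sum.neutral)
  then show ?case using insert by (simp add: pythagoras)
qed simp

lemma Re_cinner_le_norm: "Re (cinner (x::'a::chilbert) y) \<le> norm x * norm y"
proof (cases "x = 0 \<or> y = 0")
  case False
  then have "norm x * norm y > 0" by auto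
  have "0 \<le> (norm (scaleR (norm y) x - scaleR (norm x) y))\<^sup>2" by simp
  also have "\<dots> = 2 * (norm x)\<^sup>2 * (norm y)\<^sup>2 - 2 * (norm x * norm y) * Re (cinner x y)"
    by (simp add: power2_norm_diff cinner_scaleR_left cinner_scaleR_right algebra_simps)
  finally have "(norm x * norm y) * Re (cinner x y) \<le> (norm x * norm y) * (norm x * norm y)"
    by (simp add: power2_eq_square algebra_simps)
  with \<open>norm x * norm y > 0\<close> show ?thesis by (simp add: mult_le_cancel_left_pos)
qed auto

lemma norm_cinner_le: "cmod (cinner (x::'a::chilbert) y) \<le> norm x * norm y"
proof (cases "cinner x y = 0")
  case False
  \<comment> \<open>rotate \<open>y\<close> so that the inner product becomes real and nonnegative\<close>
  define c where "c = cnj (cinner x y) / cmod (cinner x y)"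
  have "cinner x (scaleC c y) = complex_of_real (cmod (cinner x y))"
    using False by (simp add: c_def cinner_scaleC_right complex_norm_square[symmetric]
        power2_eq_square field_simps)
  then have "cmod (cinner x y) = Re (cinner x (scaleC c y))" by simp
  also have "\<dots> \<le> norm x * norm (scaleC c y)" by (rule Re_cinner_le_norm)
  also have "\<dots> = norm x * norm y" using False by (simp add: norm_scaleC c_def norm_divide)
  finally show ?thesis .
qed simp

lemma bounded_linear_cinner_right: "bounded_linear (cinner (x::'a::chilbert))"
  by (rule bounded_linear_intro[where K="norm x"])
     (auto simp: cinner_add_right cinner_scaleR_right scaleR_conv_of_real,
      metis norm_cinner_le mult.commute)

lemma bounded_linear_scaleC: "bounded_linear (scaleC c :: 'a::chilbert \<Rightarrow> 'a)"
  by (rule bounded_linear_intro[where K="cmod c"])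
     (auto simp: scaleC_add_right scaleR_scaleC scaleC_scaleC norm_scaleC mult.commute)


section \<open>Orthogonal projections\<close>

definition csubspace :: "'a::chilbert set \<Rightarrow> bool" where
  "csubspace K \<longleftrightarrow> 0 \<in> K \<and> (\<forall>x\<in>K. \<forall>y\<in>K. x + y \<in> K) \<and> (\<forall>c. \<forall>x\<in>K. scaleC c x \<in> K)"

lemma
  assumes "csubspace K"
  shows csubspace_0: "0 \<in> K"
    and csubspace_add: "x \<in> K \<Longrightarrow> y \<in> K \<Longrightarrow> x + y \<in> K"
    and csubspace_scaleC: "x \<in> K \<Longrightarrow> scaleC c x \<in> K"
  using assms unfolding csubspace_def by auto

lemma csubspace_scaleR: "csubspace K \<Longrightarrow> x \<in> K \<Longrightarrow> scaleR r x \<in> K"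
  by (simp add: csubspace_scaleC scaleR_scaleC)

lemma csubspace_diff: "csubspace K \<Longrightarrow> x \<in> K \<Longrightarrow> y \<in> K \<Longrightarrow> x - y \<in> K"
  using csubspace_add csubspace_scaleR[of K y "-1"] by (metis diff_conv_add_uminus scaleR_minus1_left)

lemma parallelogram_min_dist:
  fixes x :: "'a::chilbert"
  assumes sub: "csubspace K" and "a \<in> K" "b \<in> K" "d \<ge> 0"
    and d_le: "\<And>y. y \<in> K \<Longrightarrow> d \<le> norm (x - y)"
  shows "(norm (a - b))\<^sup>2 \<le> 2 * (norm (x - a))\<^sup>2 + 2 * (norm (x - b))\<^sup>2 - 4 * d\<^sup>2"
proof -
  have "scaleR (1/2) (a + b) \<in> K" using assms(2,3) sub by (simp add: csubspace_add csubspace_scaleR)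
  then have "d \<le> norm (x - scaleR (1/2) (a + b))" by (rule d_le)
  also have "x - scaleR (1/2) (a + b) = scaleR (1/2) ((x - a) + (x - b))"
    by (simp add: algebra_simps flip: scaleR_add_left)
  finally have "(2 * d)\<^sup>2 \<le> (norm ((x - a) + (x - b)))\<^sup>2"
    using \<open>d \<ge> 0\<close> by (intro power_mono) auto
  moreover have "(norm ((x - a) + (x - b)))\<^sup>2 + (norm (a - b))\<^sup>2
      = 2 * (norm (x - a))\<^sup>2 + 2 * (norm (x - b))\<^sup>2"
    using power2_norm_add[of "x - a" "x - b"] power2_norm_diff[of "x - a" "x - b"]
    by (simp add: norm_minus_commute)
  ultimately show ?thesis by (simp add: power_mult_distrib)
qed

lemma minimizing_sequence_Cauchy:
  fixes x :: "'a::chilbert"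
  assumes sub: "csubspace K" and kK: "\<And>n. k n \<in> K" and "d \<ge> 0"
    and d_le: "\<And>y. y \<in> K \<Longrightarrow> d \<le> norm (x - y)"
    and kd: "\<And>n. norm (x - k n) < d + inverse (real (Suc n))"
  shows "Cauchy k"
proof (rule metric_CauchyI)
  have close: "(norm (k m - k n))\<^sup>2 \<le> 2 * (norm (x - k m))\<^sup>2 + 2 * (norm (x - k n))\<^sup>2 - 4 * d\<^sup>2"
    for m n
    using kK \<open>d \<ge> 0\<close> d_le by (intro parallelogram_min_dist[OF sub])
  have far: "(norm (x - k n))\<^sup>2 \<le> d\<^sup>2 + (2 * d + 1) * inverse (real (Suc N))" if "N \<le> n" for n N
  proof -
    have "inverse (real (Suc n)) \<le> inverse (real (Suc N))" using that by (simp add: field_simps)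
    then have "norm (x - k n) \<le> d + inverse (real (Suc N))" using kd[of n] by linarith
    then have "(norm (x - k n))\<^sup>2 \<le> (d + inverse (real (Suc N)))\<^sup>2" by (intro power_mono) auto
    also have "\<dots> = d\<^sup>2 + (2 * d + inverse (real (Suc N))) * inverse (real (Suc N))"
      by (simp add: power2_eq_square algebra_simps)
    also have "\<dots> \<le> d\<^sup>2 + (2 * d + 1) * inverse (real (Suc N))"
      by (intro add_left_mono mult_right_mono) (auto simp: field_simps)
    finally show ?thesis .
  qed
  fix e :: real assume "e > 0"
  obtain N where N: "4 * (2 * d + 1) / e\<^sup>2 < real N" using reals_Archimedean2 by blast
  have "4 * (2 * d + 1) < e\<^sup>2 * real N" using N \<open>e > 0\<close> by (simp add: field_simps)
  also have "\<dots> \<le> e\<^sup>2 * real (Suc N)" by (intro mult_left_mono) auto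
  finally have "4 * (2 * d + 1) < e\<^sup>2 * real (Suc N)" .
  then have small: "4 * (2 * d + 1) * inverse (real (Suc N)) < e\<^sup>2" by (simp add: field_simps)
  have "dist (k m) (k n) < e" if "N \<le> m" "N \<le> n" for m n
  proof -
    have "(norm (k m - k n))\<^sup>2 < e\<^sup>2"
      using close[of m n] far[OF \<open>N \<le> m\<close>] far[OF \<open>N \<le> n\<close>] small by linarith
    then show ?thesis using \<open>e > 0\<close> by (simp add: dist_norm power_less_imp_less_base)
  qed
  then show "\<exists>M. \<forall>m\<ge>M. \<forall>n\<ge>M. dist (k m) (k n) < e" by blast
qed

lemma min_dist_exists:
  fixes x :: "'a::chilbert"
  assumes "closed K" and sub: "csubspace K"
  shows "\<exists>p\<in>K. \<forall>k\<in>K. norm (x - p) \<le> norm (x - k)"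
proof -
  define d where "d = infdist x K"
  have "K \<noteq> {}" using csubspace_0[OF sub] by auto
  have d_le: "d \<le> norm (x - k)" if "k \<in> K" for k
    using infdist_le[OF that, of x] by (simp add: d_def dist_norm)
  have "\<exists>k\<in>K. norm (x - k) < d + inverse (real (Suc n))" for n
  proof -
    have "bdd_below ((\<lambda>a. dist x a) ` K)" by (rule bdd_belowI[where m=0]) auto
    moreover have "(INF a\<in>K. dist x a) < d + inverse (real (Suc n))"
      by (simp add: d_def infdist_notempty[OF \<open>K \<noteq> {}\<close>])
    ultimately show ?thesis by (simp add: cINF_less_iff[OF \<open>K \<noteq> {}\<close>] dist_norm)
  qed
  then obtain k where kK: "\<And>n. k n \<in> K"
    and kd: "\<And>n. norm (x - k n) < d + inverse (real (Suc n))"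
    by metis
  have "Cauchy k"
    by (rule minimizing_sequence_Cauchy[OF sub kK _ d_le kd]) (simp add: d_def infdist_nonneg)
  then obtain p where lim: "k \<longlonglongrightarrow> p" using Cauchy_convergent_iff convergent_def by blast
  have "p \<in> K" using closed_sequentially[OF \<open>closed K\<close>] kK lim by blast
  have "norm (x - p) \<le> d"
  proof (rule LIMSEQ_le)
    show "(\<lambda>n. norm (x - k n)) \<longlonglongrightarrow> norm (x - p)" by (intro tendsto_intros lim)
    show "(\<lambda>n. d + inverse (real (Suc n))) \<longlonglongrightarrow> d"
      using tendsto_add[OF tendsto_const LIMSEQ_inverse_real_of_nat, of d] by simp
    show "\<exists>N. \<forall>n\<ge>N. norm (x - k n) \<le> d + inverse (real (Suc n))" using kd less_imp_le by blast
  qed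
  then show ?thesis using \<open>p \<in> K\<close> d_le by force
qed

lemma linear_le_quadratic_imp_zero:
  fixes A B :: real
  assumes "\<And>t. 2 * t * A \<le> t\<^sup>2 * B" and "B \<ge> 0"
  shows "A = 0"
proof -
  define t where "t = A / (B + 1)"
  have A: "A = t * (B + 1)" using \<open>B \<ge> 0\<close> by (simp add: t_def)
  have "2 * t * (t * (B + 1)) \<le> t\<^sup>2 * B" using assms(1)[of t] A by simp
  then have "t\<^sup>2 * (B + 2) \<le> 0" by (simp add: power2_eq_square algebra_simps)
  then have "t\<^sup>2 \<le> 0" using \<open>B \<ge> 0\<close> by (auto simp: mult_le_0_iff)
  then have "t = 0" by simp
  then show ?thesis using A by simp
qed

lemma min_dist_orthogonal:
  fixes x :: "'a::chilbert"
  assumes sub: "csubspace K" and "p \<in> K" and min: "\<And>k. k \<in> K \<Longrightarrow> norm (x - p) \<le> norm (x - k)"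
    and "k \<in> K"
  shows "cinner k (x - p) = 0"
proof -
  have Re0: "Re (cinner (x - p) k) = 0" if "k \<in> K" for k
  proof (rule linear_le_quadratic_imp_zero)
    fix t :: real
    have "p + scaleR t k \<in> K" using \<open>p \<in> K\<close> that sub by (simp add: csubspace_add csubspace_scaleR)
    then have "norm (x - p) \<le> norm (x - p - scaleR t k)"
      using min[of "p + scaleR t k"] by (simp add: algebra_simps)
    then have "(norm (x - p))\<^sup>2 \<le> (norm (x - p - scaleR t k))\<^sup>2" by (intro power_mono) auto
    also have "\<dots> = (norm (x - p))\<^sup>2 + t\<^sup>2 * (norm k)\<^sup>2 - 2 * (t * Re (cinner (x - p) k))"
      by (simp add: power2_norm_diff cinner_scaleR_right power_mult_distrib abs_mult)
    finally show "2 * t * Re (cinner (x - p) k) \<le> t\<^sup>2 * (norm k)\<^sup>2" by simp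
  qed simp
  have "scaleC \<i> k \<in> K" using \<open>k \<in> K\<close> sub by (simp add: csubspace_scaleC)
  then have "Im (cinner (x - p) k) = 0" using Re0 by (fastforce simp: cinner_scaleC_right)
  then have "cinner (x - p) k = 0" using Re0[OF \<open>k \<in> K\<close>] by (simp add: complex_eq_iff)
  then show ?thesis by (metis cinner_commute complex_cnj_zero)
qed

definition orth_proj :: "'a::chilbert set \<Rightarrow> 'a \<Rightarrow> 'a" where
  "orth_proj K x = (SOME p. p \<in> K \<and> (\<forall>k\<in>K. cinner k (x - p) = 0))"

locale closed_csubspace =
  fixes K :: "'a::chilbert set"
  assumes closed: "closed K" and csubspace: "csubspace K"
begin

lemma orth_proj_in_orthogonal: "orth_proj K x \<in> K \<and> (\<forall>k\<in>K. cinner k (x - orth_proj K x) = 0)"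
proof -
  obtain p where "p \<in> K" "\<forall>k\<in>K. norm (x - p) \<le> norm (x - k)"
    using min_dist_exists[OF closed csubspace] by blast
  then have "p \<in> K \<and> (\<forall>k\<in>K. cinner k (x - p) = 0)" using min_dist_orthogonal[OF csubspace] by blast
  then show ?thesis unfolding orth_proj_def by (rule someI)
qed

lemma orth_proj_in: "orth_proj K x \<in> K"
  using orth_proj_in_orthogonal by blast

lemma orth_proj_orthogonal: "k \<in> K \<Longrightarrow> cinner k (x - orth_proj K x) = 0"
  using orth_proj_in_orthogonal by blast

lemma orth_proj_unique:
  assumes "p \<in> K" and "\<And>k. k \<in> K \<Longrightarrow> cinner k (x - p) = 0"
  shows "orth_proj K x = p"
proof -
  have d: "orth_proj K x - p \<in> K" using assms(1) orth_proj_in csubspace by (simp add: csubspace_diff)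
  have "cinner (orth_proj K x - p) (orth_proj K x - p)
      = cinner (orth_proj K x - p) (x - p) - cinner (orth_proj K x - p) (x - orth_proj K x)"
    by (simp add: cinner_diff_right)
  also have "\<dots> = 0" using assms(2)[OF d] orth_proj_orthogonal[OF d] by simp
  finally show ?thesis by simp
qed

lemma orth_proj_fixed: "x \<in> K \<Longrightarrow> orth_proj K x = x"
  by (rule orth_proj_unique) auto

lemma orth_proj_idem: "orth_proj K (orth_proj K x) = orth_proj K x"
  by (rule orth_proj_fixed[OF orth_proj_in])

lemma orth_proj_add: "orth_proj K (x + y) = orth_proj K x + orth_proj K y"
proof (rule orth_proj_unique)
  show "orth_proj K x + orth_proj K y \<in> K" using csubspace orth_proj_in by (simp add: csubspace_add)
  fix k assume "k \<in> K"
  have "x + y - (orth_proj K x + orth_proj K y) = (x - orth_proj K x) + (y - orth_proj K y)" by simp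
  then show "cinner k (x + y - (orth_proj K x + orth_proj K y)) = 0"
    using orth_proj_orthogonal[OF \<open>k \<in> K\<close>] by (simp only: cinner_add_right) simp
qed

lemma orth_proj_scaleC: "orth_proj K (scaleC c x) = scaleC c (orth_proj K x)"
proof (rule orth_proj_unique)
  show "scaleC c (orth_proj K x) \<in> K" using csubspace orth_proj_in by (simp add: csubspace_scaleC)
  fix k assume "k \<in> K"
  then show "cinner k (scaleC c x - scaleC c (orth_proj K x)) = 0"
    using orth_proj_orthogonal by (simp add: cinner_scaleC_right flip: scaleC_diff_right)
qed

lemma norm_orth_proj_le: "norm (orth_proj K x) \<le> norm x"
proof -
  have "(norm (orth_proj K x + (x - orth_proj K x)))\<^sup>2
      = (norm (orth_proj K x))\<^sup>2 + (norm (x - orth_proj K x))\<^sup>2"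
    by (rule pythagoras[OF orth_proj_orthogonal[OF orth_proj_in]])
  then have "(norm (orth_proj K x))\<^sup>2 \<le> (norm x)\<^sup>2" by simp
  then show ?thesis by (simp add: power2_le_iff_abs_le)
qed

lemma orth_proj_self_adjoint: "cinner (orth_proj K x) y = cinner x (orth_proj K y)"
proof -
  have "cinner (orth_proj K x) (y - orth_proj K y) = 0"
    by (rule orth_proj_orthogonal[OF orth_proj_in])
  moreover have "cinner (x - orth_proj K x) (orth_proj K y) = 0"
    by (metis cinner_commute complex_cnj_zero orth_proj_orthogonal[OF orth_proj_in])
  ultimately show ?thesis by (simp add: cinner_diff_left cinner_diff_right)
qed

lemma bounded_clinear_orth_proj: "bounded_clinear (orth_proj K)"
  unfolding bounded_clinear_def
  by (auto intro!: bounded_linear_intro[where K=1]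
      simp: orth_proj_add orth_proj_scaleC scaleR_scaleC norm_orth_proj_le)

end

lemma closed_csubspace_Inter:
  "(\<And>V. V \<in> S \<Longrightarrow> closed_csubspace V) \<Longrightarrow> closed_csubspace (\<Inter>S)"
  unfolding closed_csubspace_def csubspace_def by auto


section \<open>Riesz representation and adjoints\<close>

lemma riesz_representation:
  fixes f :: "'a::chilbert \<Rightarrow> complex"
  assumes bl: "bounded_linear f" and f_scaleC: "\<And>c x. f (scaleC c x) = c * f x"
  shows "\<exists>z. \<forall>x. f x = cinner z x"
proof (cases "\<forall>x. f x = 0")
  case True then show ?thesis by (intro exI[of _ 0]) simp
next
  case False
  then obtain w where "f w \<noteq> 0" by blast
  define N where "N = f -` {0}"
  interpret N: closed_csubspace N
  proof
    show "closed N" unfolding N_def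
      using continuous_closed_vimage[of "{0}" f] bl by (simp add: linear_continuous_at)
    show "csubspace N" unfolding csubspace_def N_def using bl f_scaleC by (auto simp: linear_simps)
  qed
  \<comment> \<open>a nonzero vector orthogonal to the kernel\<close>
  define u where "u = w - orth_proj N w"
  have "f u = f w" using N.orth_proj_in[of w] bl by (simp add: u_def N_def linear_simps)
  then have "u \<noteq> 0" using \<open>f w \<noteq> 0\<close> bl by (auto simp: linear_simps)
  define z where "z = scaleC (cnj (f u) / complex_of_real ((norm u)\<^sup>2)) u"
  have "f x = cinner z x" for x
  proof -
    have "scaleC (f x) u - scaleC (f u) x \<in> N"
      using bl by (simp add: N_def linear_simps f_scaleC mult.commute)
    then have "cinner (scaleC (f x) u - scaleC (f u) x) u = 0"
      using N.orth_proj_orthogonal[of _ w] by (simp add: u_def)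
    then have "cinner u (scaleC (f x) u - scaleC (f u) x) = 0"
      by (metis cinner_commute complex_cnj_zero)
    then have "f x * complex_of_real ((norm u)\<^sup>2) = f u * cinner u x"
      by (simp add: cinner_diff_right cinner_scaleC_right cinner_self)
    then show ?thesis using \<open>u \<noteq> 0\<close> by (simp add: z_def cinner_scaleC_left field_simps)
  qed
  then show ?thesis by blast
qed

lemma adjoint_exists:
  assumes "bounded_clinear (T::'a::chilbert \<Rightarrow> 'a)"
  shows "\<exists>S. \<forall>x y. cinner (T x) y = cinner x (S y)"
proof -
  have bl: "bounded_linear T" and T_scaleC: "\<And>c x. T (scaleC c x) = scaleC c (T x)"
    using assms by (auto simp: bounded_clinear_def)
  have "\<exists>z. \<forall>x. cinner y (T x) = cinner z x" for y
  proof (rule riesz_representation)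
    show "bounded_linear (\<lambda>x. cinner y (T x))"
      using bounded_linear_compose[OF bounded_linear_cinner_right bl] by (simp add: o_def)
  qed (simp add: T_scaleC cinner_scaleC_right)
  then obtain S where "\<And>x y. cinner y (T x) = cinner (S y) x" by metis
  then show ?thesis by (metis cinner_commute)
qed

lemma cinner_adj_right:
  assumes "bounded_clinear T" shows "cinner (T x) y = cinner x (adj T y)"
proof -
  have "\<forall>x y. cinner (T x) y = cinner x (adj T y)"
    unfolding adj_def by (rule someI_ex[OF adjoint_exists[OF assms]])
  then show ?thesis by blast
qed

lemma cinner_adj_left:
  assumes "bounded_clinear T" shows "cinner (adj T x) y = cinner x (T y)"
  by (metis cinner_adj_right[OF assms] cinner_commute)

lemma adj_eqI:
  assumes "bounded_clinear T" and "\<And>x y. cinner (T x) y = cinner x (S y)"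
  shows "adj T = S"
proof
  fix y show "adj T y = S y"
    by (rule cinner_right_eqI) (metis cinner_adj_right[OF assms(1)] assms(2))
qed

lemma
  assumes "bounded_clinear T"
  shows bounded_clinear_linear: "bounded_linear T"
    and clinear_scaleC: "T (scaleC c x) = scaleC c (T x)"
    and clinear_add: "T (x + y) = T x + T y"
    and clinear_diff: "T (x - y) = T x - T y"
    and clinear_zero: "T 0 = 0"
    and clinear_scaleR: "T (scaleR r x) = scaleR r (T x)"
  using assms by (auto simp: bounded_clinear_def linear_simps)

lemma bounded_clinear_ident: "bounded_clinear (\<lambda>x. x)"
  unfolding bounded_clinear_def by simp

lemma bounded_clinear_compose:
  "bounded_clinear A \<Longrightarrow> bounded_clinear B \<Longrightarrow> bounded_clinear (\<lambda>x. A (B x))"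
  unfolding bounded_clinear_def using bounded_linear_compose[of A B] by auto

lemma bounded_clinear_add:
  "bounded_clinear A \<Longrightarrow> bounded_clinear B \<Longrightarrow> bounded_clinear (\<lambda>x. A x + B x)"
  unfolding bounded_clinear_def using bounded_linear_add[of A B] by (auto simp: scaleC_add_right)

lemma bounded_clinear_diff:
  "bounded_clinear A \<Longrightarrow> bounded_clinear B \<Longrightarrow> bounded_clinear (\<lambda>x. A x - B x)"
  unfolding bounded_clinear_def using bounded_linear_sub[of A B] by (auto simp: scaleC_diff_right)

lemma bounded_clinear_scaleR: "bounded_clinear A \<Longrightarrow> bounded_clinear (\<lambda>x. scaleR r (A x))"
  unfolding bounded_clinear_def
  using bounded_linear_compose[OF bounded_linear_scaleR_right[of r], of A]
  by (auto simp: scaleR_scaleC scaleC_scaleC mult.commute)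

lemma bounded_clinear_adj:
  assumes T: "bounded_clinear T" shows "bounded_clinear (adj T)"
proof -
  obtain K where K: "\<And>x. norm (T x) \<le> norm x * K" "K > 0"
    using T bounded_linear.pos_bounded unfolding bounded_clinear_def by blast
  have "norm (adj T y) \<le> norm y * K" for y
  proof -
    have "(norm (adj T y))\<^sup>2 = Re (cinner (T (adj T y)) y)"
      by (simp add: cinner_adj_right[OF T] Re_cinner_self)
    also have "\<dots> \<le> norm (adj T y) * K * norm y"
      using Re_cinner_le_norm K by (meson mult_right_mono norm_ge_zero order_trans)
    finally show ?thesis using K(2)
      by (cases "adj T y = 0") (auto simp: power2_eq_square algebra_simps mult_le_cancel_left_pos)
  qed
  moreover have "adj T (x + y) = adj T x + adj T y" for x y
    by (rule cinner_right_eqI) (simp add: cinner_adj_right[OF T, symmetric] cinner_add_right)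
  moreover have "adj T (scaleC c x) = scaleC c (adj T x)" for c x
    by (rule cinner_right_eqI) (simp add: cinner_adj_right[OF T, symmetric] cinner_scaleC_right)
  ultimately show ?thesis unfolding bounded_clinear_def
    by (intro conjI allI bounded_linear_intro[where K=K]) (simp_all add: scaleR_scaleC)
qed

lemma closed_csubspace_vimage:
  assumes "closed_csubspace K" "bounded_clinear B"
  shows "closed_csubspace (B -` K)"
proof
  show "closed (B -` K)"
    using assms by (intro continuous_closed_vimage linear_continuous_at bounded_clinear_linear)
      (auto simp: closed_csubspace_def)
  show "csubspace (B -` K)"
    using assms by (auto simp: closed_csubspace_def csubspace_def clinear_add clinear_zero clinear_scaleC)
qed

lemma closed_csubspace_fixpoints:
  assumes "bounded_clinear Z" shows "closed_csubspace {y. Z y = y}"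
proof
  show "closed {y. Z y = y}"
    using assms by (intro closed_Collect_eq continuous_on_id linear_continuous_on bounded_clinear_linear)
  show "csubspace {y. Z y = y}"
    using assms by (auto simp: csubspace_def clinear_add clinear_zero clinear_scaleC)
qed

lemma closed_csubspace_kernel:
  assumes "bounded_clinear Z" shows "closed_csubspace {y. Z y = 0}"
proof
  show "closed {y. Z y = 0}"
    using assms by (intro closed_Collect_eq continuous_on_const linear_continuous_on bounded_clinear_linear)
  show "csubspace {y. Z y = 0}"
    using assms by (auto simp: csubspace_def clinear_add clinear_zero clinear_scaleC)
qed

lemma orth_proj_commute:
  assumes "closed_csubspace K" and B: "bounded_clinear B"
    and "\<And>y. y \<in> K \<Longrightarrow> B y \<in> K" and "\<And>y. y \<in> K \<Longrightarrow> adj B y \<in> K"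
  shows "orth_proj K (B x) = B (orth_proj K x)"
proof -
  interpret closed_csubspace K by fact
  show ?thesis
  proof (rule cinner_right_eqI)
    fix y
    have "cinner y (orth_proj K (B x)) = cinner (adj B (orth_proj K y)) x"
      by (simp add: orth_proj_self_adjoint cinner_adj_left[OF B])
    also have "\<dots> = cinner (orth_proj K (adj B (orth_proj K y))) x"
      using assms(4)[OF orth_proj_in] by (simp add: orth_proj_fixed)
    also have "\<dots> = cinner (orth_proj K y) (B (orth_proj K x))"
      by (simp add: orth_proj_self_adjoint cinner_adj_left[OF B])
    also have "\<dots> = cinner y (B (orth_proj K x))"
      using assms(3)[OF orth_proj_in] by (simp add: orth_proj_self_adjoint orth_proj_fixed)
    finally show "cinner y (orth_proj K (B x)) = cinner y (B (orth_proj K x))" .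
  qed
qed

section \<open>Commutants and von Neumann algebras\<close>

lemma commutantD: "T \<in> commutant S \<Longrightarrow> A \<in> S \<Longrightarrow> T (A x) = A (T x)"
  unfolding commutant_def by (auto simp: fun_eq_iff)

lemma commutant_bounded_clinear: "T \<in> commutant S \<Longrightarrow> bounded_clinear T"
  by (simp add: commutant_def)

lemma commutantI:
  "bounded_clinear T \<Longrightarrow> (\<And>A x. A \<in> S \<Longrightarrow> T (A x) = A (T x)) \<Longrightarrow> T \<in> commutant S"
  unfolding commutant_def by (auto simp: fun_eq_iff)

lemma commutant_ident: "(\<lambda>x. x) \<in> commutant S"
  by (rule commutantI[OF bounded_clinear_ident]) simp

lemma commutant_compose:
  assumes "A \<in> commutant S" "B \<in> commutant S"
  shows "(\<lambda>x. A (B x)) \<in> commutant S"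
proof (rule commutantI)
  show "bounded_clinear (\<lambda>x. A (B x))"
    using assms by (simp add: bounded_clinear_compose commutant_bounded_clinear)
  show "A (B (C x)) = C (A (B x))" if "C \<in> S" for C x
    using commutantD[OF assms(1) that] commutantD[OF assms(2) that] by simp
qed

lemma
  assumes "S \<subseteq> {T. bounded_clinear T}" "A \<in> commutant S" "B \<in> commutant S"
  shows commutant_add: "(\<lambda>x. A x + B x) \<in> commutant S"
    and commutant_diff: "(\<lambda>x. A x - B x) \<in> commutant S"
proof -
  have A: "bounded_clinear A" and B: "bounded_clinear B"
    using assms(2,3) by (auto intro: commutant_bounded_clinear)
  have "C (A x) + C (B x) = C (A x + B x)" "C (A x) - C (B x) = C (A x - B x)" if "C \<in> S" for C x
    using assms(1) that by (auto simp: clinear_add clinear_diff)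
  then show "(\<lambda>x. A x + B x) \<in> commutant S" "(\<lambda>x. A x - B x) \<in> commutant S"
    using commutantD[OF assms(2)] commutantD[OF assms(3)]
    by (auto intro!: commutantI bounded_clinear_add[OF A B] bounded_clinear_diff[OF A B])
qed

lemma commutant_scaleR:
  "S \<subseteq> {T. bounded_clinear T} \<Longrightarrow> A \<in> commutant S \<Longrightarrow> (\<lambda>x. scaleR r (A x)) \<in> commutant S"
  by (intro commutantI bounded_clinear_scaleR)
     (auto simp: commutant_bounded_clinear commutantD clinear_scaleR subset_iff)

lemma commutant_adj:
  assumes "S \<subseteq> {T. bounded_clinear T}" "\<And>A. A \<in> S \<Longrightarrow> adj A \<in> S" "B \<in> commutant S"
  shows "adj B \<in> commutant S"
proof (rule commutantI)
  have B: "bounded_clinear B" using assms(3) by (rule commutant_bounded_clinear)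
  show "bounded_clinear (adj B)" by (rule bounded_clinear_adj[OF B])
  fix A y assume A: "A \<in> S"
  then have A': "bounded_clinear A" using assms(1) by auto
  show "adj B (A y) = A (adj B y)"
  proof (rule cinner_right_eqI)
    fix x
    have "cinner x (adj B (A y)) = cinner (adj A (B x)) y"
      by (simp add: cinner_adj_right[OF B, symmetric] cinner_adj_left[OF A'])
    also have "adj A (B x) = B (adj A x)" using commutantD[OF assms(3) assms(2)[OF A]] by simp
    also have "cinner (B (adj A x)) y = cinner x (A (adj B y))"
      by (simp add: cinner_adj_right[OF B] cinner_adj_left[OF A'])
    finally show "cinner x (adj B (A y)) = cinner x (A (adj B y))" .
  qed
qed


locale vn_algebra =
  fixes M :: "('a::chilbert \<Rightarrow> 'a) set"
  assumes von_neumann_algebra: "von_neumann_algebra M"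
begin

lemma bounded_clinear_mem: "A \<in> M \<Longrightarrow> bounded_clinear A"
  using von_neumann_algebra unfolding von_neumann_algebra_def by auto

lemma adj_closed: "A \<in> M \<Longrightarrow> adj A \<in> M"
  using von_neumann_algebra unfolding von_neumann_algebra_def by auto

lemma double_commutant: "commutant (commutant M) = M"
  using von_neumann_algebra unfolding von_neumann_algebra_def by auto

lemma commute_with_commutant: "A \<in> M \<Longrightarrow> B \<in> commutant M \<Longrightarrow> A (B x) = B (A x)"
  using commutantD[of A "commutant M" B x] double_commutant by metis

lemma memI: "bounded_clinear T \<Longrightarrow> (\<And>B x. B \<in> commutant M \<Longrightarrow> T (B x) = B (T x)) \<Longrightarrow> T \<in> M"
  using commutantI[of T "commutant M"] double_commutant by auto

lemma adj_commutant_closed: "B \<in> commutant M \<Longrightarrow> adj B \<in> commutant M"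
  using commutant_adj[of M B] bounded_clinear_mem adj_closed by blast

lemma ident_closed: "(\<lambda>x. x) \<in> M"
  using commutant_ident double_commutant by metis

lemma compose_closed: "A \<in> M \<Longrightarrow> B \<in> M \<Longrightarrow> (\<lambda>x. A (B x)) \<in> M"
  using commutant_compose double_commutant by metis

lemma
  assumes "A \<in> M" "B \<in> M"
  shows add_closed: "(\<lambda>x. A x + B x) \<in> M" and diff_closed: "(\<lambda>x. A x - B x) \<in> M"
  using assms commutant_add[of "commutant M"] commutant_diff[of "commutant M"] double_commutant
    commutant_bounded_clinear by blast+

lemma scaleR_closed: "A \<in> M \<Longrightarrow> (\<lambda>x. scaleR r (A x)) \<in> M"
  using commutant_scaleR[of "commutant M"] double_commutant commutant_bounded_clinear by blast

lemma
  assumes "is_projection M P"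
  shows is_projection_mem: "P \<in> M"
    and is_projection_bounded_clinear: "bounded_clinear P"
    and is_projection_idem: "P (P x) = P x"
    and is_projection_self_adjoint: "cinner (P x) y = cinner x (P y)"
  using assms bounded_clinear_mem cinner_adj_right[of P x y]
  by (auto simp: is_projection_def fun_eq_iff)

lemma is_projectionI:
  assumes "P \<in> M" "\<And>x. P (P x) = P x" "\<And>x y. cinner (P x) y = cinner x (P y)"
  shows "is_projection M P"
  using assms adj_eqI[OF bounded_clinear_mem[OF assms(1)], of P]
  by (auto simp: is_projection_def fun_eq_iff)

lemma
  assumes "central_projection M Z"
  shows central_projection_mem: "Z \<in> M"
    and central_projection_commutant: "Z \<in> commutant M"
    and central_projection_bounded_clinear: "bounded_clinear Z"
    and central_projection_idem: "Z (Z x) = Z x"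
    and central_projection_self_adjoint: "cinner (Z x) y = cinner x (Z y)"
  using assms is_projection_bounded_clinear is_projection_idem is_projection_self_adjoint
  by (auto simp: central_projection_def is_projection_def)

lemma central_commute: "central_projection M Z \<Longrightarrow> A \<in> M \<Longrightarrow> Z (A x) = A (Z x)"
  using central_projection_commutant commute_with_commutant by metis

lemma central_projections_commute:
  "central_projection M Z \<Longrightarrow> central_projection M W \<Longrightarrow> Z (W x) = W (Z x)"
  using central_commute central_projection_mem by metis

lemma central_projection_compose:
  assumes Z: "central_projection M Z" and W: "central_projection M W"
  shows "central_projection M (\<lambda>x. Z (W x))"
  unfolding central_projection_def
proof
  show "is_projection M (\<lambda>x. Z (W x))"
  proof (rule is_projectionI)
    show "(\<lambda>x. Z (W x)) \<in> M" using Z W by (simp add: compose_closed central_projection_mem)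
    show "Z (W (Z (W x))) = Z (W x)" for x
      using central_projections_commute[OF Z W] central_projection_idem[OF Z]
        central_projection_idem[OF W] by metis
    show "cinner (Z (W x)) y = cinner x (Z (W y))" for x y
      using central_projection_self_adjoint[OF Z] central_projection_self_adjoint[OF W]
        central_projections_commute[OF Z W] by metis
  qed
  show "(\<lambda>x. Z (W x)) \<in> commutant M"
    using Z W by (simp add: commutant_compose central_projection_commutant)
qed

lemma central_projection_complement:
  assumes Z: "central_projection M Z"
  shows "central_projection M (\<lambda>x. x - Z x)"
  unfolding central_projection_def
proof
  show "is_projection M (\<lambda>x. x - Z x)"
  proof (rule is_projectionI)
    show "(\<lambda>x. x - Z x) \<in> M" using diff_closed[OF ident_closed central_projection_mem[OF Z]] .
    show "x - Z x - Z (x - Z x) = x - Z x" for x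
      using central_projection_idem[OF Z]
      by (simp add: clinear_diff[OF central_projection_bounded_clinear[OF Z]])
    show "cinner (x - Z x) y = cinner x (y - Z y)" for x y
      using central_projection_self_adjoint[OF Z] by (simp add: cinner_diff_left cinner_diff_right)
  qed
  show "(\<lambda>x. x - Z x) \<in> commutant M"
    using commutant_diff[OF _ commutant_ident central_projection_commutant[OF Z]]
      bounded_clinear_mem by blast
qed

end


section \<open>Central supports\<close>

context vn_algebra
begin

lemma central_support_eqI:
  assumes Z: "central_projection M Z" and "\<And>x. Z (T x) = T x"
    and least: "\<And>Z' x. central_projection M Z' \<Longrightarrow> (\<And>y. Z' (T y) = T y) \<Longrightarrow> Z (Z' x) = Z x"
  shows "central_support M T = Z"
  unfolding central_support_def
proof (rule the_equality)
  show "central_projection M Z \<and> Z \<circ> T = T \<and>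
      (\<forall>Z'. central_projection M Z' \<and> Z' \<circ> T = T \<longrightarrow> Z \<circ> Z' = Z)"
    using assms by (auto simp: fun_eq_iff)
  fix Z' assume Z': "central_projection M Z' \<and> Z' \<circ> T = T \<and>
      (\<forall>Z''. central_projection M Z'' \<and> Z'' \<circ> T = T \<longrightarrow> Z' \<circ> Z'' = Z')"
  show "Z' = Z"
  proof
    fix x
    have "Z' x = Z' (Z x)" using Z' assms(1,2) by (auto simp: fun_eq_iff)
    also have "\<dots> = Z (Z' x)" using Z' central_projections_commute[OF Z] by metis
    also have "\<dots> = Z x" using Z' least by (auto simp: fun_eq_iff)
    finally show "Z' x = Z x" .
  qed
qed

definition cyclic_subspace :: "('a \<Rightarrow> 'a) \<Rightarrow> 'a set" where
  "cyclic_subspace T = \<Inter>{V. closed_csubspace V \<and> (\<forall>A\<in>M. \<forall>x. A (T x) \<in> V)}"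

lemma closed_csubspace_cyclic_subspace: "closed_csubspace (cyclic_subspace T)"
  unfolding cyclic_subspace_def by (rule closed_csubspace_Inter) auto

lemma cyclic_subspace_generator: "A \<in> M \<Longrightarrow> A (T x) \<in> cyclic_subspace T"
  unfolding cyclic_subspace_def by auto

lemma cyclic_subspace_least:
  "closed_csubspace V \<Longrightarrow> (\<And>A x. A \<in> M \<Longrightarrow> A (T x) \<in> V) \<Longrightarrow> cyclic_subspace T \<subseteq> V"
  unfolding cyclic_subspace_def by auto

lemma cyclic_subspace_invariant:
  assumes "bounded_clinear B" and "\<And>A x. A \<in> M \<Longrightarrow> B (A (T x)) \<in> cyclic_subspace T"
    and "y \<in> cyclic_subspace T"
  shows "B y \<in> cyclic_subspace T"
proof -
  have "cyclic_subspace T \<subseteq> B -` cyclic_subspace T"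
    using assms(2) by (intro cyclic_subspace_least closed_csubspace_vimage
        closed_csubspace_cyclic_subspace assms(1)) auto
  then show ?thesis using assms(3) by auto
qed

lemma orth_proj_cyclic_subspace_commutant: "orth_proj (cyclic_subspace T) \<in> commutant M"
proof (rule commutantI)
  interpret closed_csubspace "cyclic_subspace T" by (rule closed_csubspace_cyclic_subspace)
  show "bounded_clinear (orth_proj (cyclic_subspace T))" by (rule bounded_clinear_orth_proj)
  have invariant: "A y \<in> cyclic_subspace T" if A: "A \<in> M" and "y \<in> cyclic_subspace T" for A y
  proof (rule cyclic_subspace_invariant[OF bounded_clinear_mem[OF A] _ \<open>y \<in> _\<close>])
    fix X z assume "X \<in> M"
    then show "A (X (T z)) \<in> cyclic_subspace T"
      using cyclic_subspace_generator[OF compose_closed[OF A \<open>X \<in> M\<close>], of T z] by simp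
  qed
  show "orth_proj (cyclic_subspace T) (A x) = A (orth_proj (cyclic_subspace T) x)" if A: "A \<in> M" for A x
    by (rule orth_proj_commute[OF closed_csubspace_cyclic_subspace bounded_clinear_mem[OF A]
          invariant[OF A] invariant[OF adj_closed[OF A]]])
qed

lemma orth_proj_cyclic_subspace_mem:
  assumes "T \<in> M" shows "orth_proj (cyclic_subspace T) \<in> M"
proof (rule memI)
  interpret closed_csubspace "cyclic_subspace T" by (rule closed_csubspace_cyclic_subspace)
  show "bounded_clinear (orth_proj (cyclic_subspace T))" by (rule bounded_clinear_orth_proj)
  have invariant: "B y \<in> cyclic_subspace T" if B: "B \<in> commutant M" and "y \<in> cyclic_subspace T" for B y
  proof (rule cyclic_subspace_invariant[OF commutant_bounded_clinear[OF B] _ \<open>y \<in> _\<close>])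
    fix A z assume "A \<in> M"
    then have "B (A (T z)) = A (T (B z))"
      using commute_with_commutant[OF _ B] assms by metis
    then show "B (A (T z)) \<in> cyclic_subspace T" using cyclic_subspace_generator[OF \<open>A \<in> M\<close>] by simp
  qed
  show "orth_proj (cyclic_subspace T) (B x) = B (orth_proj (cyclic_subspace T) x)"
    if B: "B \<in> commutant M" for B x
    by (rule orth_proj_commute[OF closed_csubspace_cyclic_subspace commutant_bounded_clinear[OF B]
          invariant[OF B] invariant[OF adj_commutant_closed[OF B]]])
qed

lemma orth_proj_cyclic_subspace_central:
  assumes "T \<in> M" shows "central_projection M (orth_proj (cyclic_subspace T))"
proof -
  interpret closed_csubspace "cyclic_subspace T" by (rule closed_csubspace_cyclic_subspace)
  show ?thesis unfolding central_projection_def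
    by (intro conjI is_projectionI orth_proj_cyclic_subspace_mem orth_proj_cyclic_subspace_commutant
        assms orth_proj_idem orth_proj_self_adjoint)
qed

lemma orth_proj_cyclic_subspace_fixes: "orth_proj (cyclic_subspace T) (T x) = T x"
proof -
  interpret closed_csubspace "cyclic_subspace T" by (rule closed_csubspace_cyclic_subspace)
  show ?thesis using cyclic_subspace_generator[OF ident_closed] by (simp add: orth_proj_fixed)
qed

lemma orth_proj_cyclic_subspace_least:
  assumes "T \<in> M" and Z: "central_projection M Z" and ZT: "\<And>y. Z (T y) = T y"
  shows "orth_proj (cyclic_subspace T) (Z x) = orth_proj (cyclic_subspace T) x"
proof -
  interpret closed_csubspace "cyclic_subspace T" by (rule closed_csubspace_cyclic_subspace)
  have "cyclic_subspace T \<subseteq> {y. Z y = y}"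
    using central_commute[OF Z] ZT
    by (intro cyclic_subspace_least closed_csubspace_fixpoints central_projection_bounded_clinear[OF Z])
      simp
  then have "Z (orth_proj (cyclic_subspace T) x) = orth_proj (cyclic_subspace T) x"
    using orth_proj_in by auto
  then show ?thesis
    using central_projections_commute[OF Z orth_proj_cyclic_subspace_central[OF \<open>T \<in> M\<close>]] by simp
qed

lemma central_support_eq_orth_proj:
  assumes "T \<in> M" shows "central_support M T = orth_proj (cyclic_subspace T)"
proof (rule central_support_eqI)
  show "central_projection M (orth_proj (cyclic_subspace T))"
    by (rule orth_proj_cyclic_subspace_central[OF assms])
  show "orth_proj (cyclic_subspace T) (T x) = T x" for x
    by (rule orth_proj_cyclic_subspace_fixes)
  show "orth_proj (cyclic_subspace T) (Z x) = orth_proj (cyclic_subspace T) x"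
    if "central_projection M Z" "\<And>y. Z (T y) = T y" for Z x
    using orth_proj_cyclic_subspace_least[OF assms that] .
qed

lemma
  assumes "T \<in> M"
  shows central_support_central: "central_projection M (central_support M T)"
    and central_support_bounded_clinear: "bounded_clinear (central_support M T)"
    and central_support_fixes: "central_support M T (T x) = T x"
    and central_support_least: "central_projection M Z \<Longrightarrow> (\<And>y. Z (T y) = T y) \<Longrightarrow>
      central_support M T (Z x) = central_support M T x"
  unfolding central_support_eq_orth_proj[OF assms]
  by (rule orth_proj_cyclic_subspace_central[OF assms],
      rule central_projection_bounded_clinear[OF orth_proj_cyclic_subspace_central[OF assms]],
      rule orth_proj_cyclic_subspace_fixes,
      rule orth_proj_cyclic_subspace_least[OF assms])

lemma central_support_mem:
  assumes "T \<in> M" and "closed_csubspace V" and "\<And>A x. A \<in> M \<Longrightarrow> A (T x) \<in> V"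
  shows "central_support M T x \<in> V"
proof -
  interpret closed_csubspace "cyclic_subspace T" by (rule closed_csubspace_cyclic_subspace)
  have "cyclic_subspace T \<subseteq> V" using assms(3) by (rule cyclic_subspace_least[OF assms(2)])
  then show ?thesis unfolding central_support_eq_orth_proj[OF assms(1)] using orth_proj_in by blast
qed

lemma central_support_annihilated:
  assumes T: "T \<in> M" and Z: "central_projection M Z" and ZT: "\<And>x. Z (T x) = 0"
  shows "central_support M T (Z x) = 0"
proof -
  have "central_support M T (x - Z x) = central_support M T x"
    by (rule central_support_least[OF T central_projection_complement[OF Z]]) (simp add: ZT)
  then show ?thesis by (simp add: clinear_diff[OF central_support_bounded_clinear[OF T]])
qed

lemma central_support_central_mult:
  assumes W: "central_projection M W" and "B \<in> M"
  shows "central_support M (\<lambda>y. W (B y)) = (\<lambda>x. W (central_support M B x))"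
proof (rule central_support_eqI)
  let ?C = "central_support M B"
  have C: "central_projection M ?C" by (rule central_support_central[OF \<open>B \<in> M\<close>])
  show "central_projection M (\<lambda>x. W (?C x))" by (rule central_projection_compose[OF W C])
  show "W (?C (W (B x))) = W (B x)" for x
    using central_projections_commute[OF W C] central_projection_idem[OF W]
      central_support_fixes[OF \<open>B \<in> M\<close>] by metis
  fix Z x assume Z: "central_projection M Z" and ZWB: "\<And>y. Z (W (B y)) = W (B y)"
  \<comment> \<open>\<open>(1 - Z) W\<close> annihilates \<open>B\<close>, hence also \<open>C\<^sub>B\<close>\<close>
  have "?C (W x - Z (W x)) = 0"
    using central_support_annihilated[OF \<open>B \<in> M\<close>
        central_projection_compose[OF central_projection_complement[OF Z] W]] ZWB by simp
  then have "?C (W x) = ?C (Z (W x))"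
    by (simp add: clinear_diff[OF central_support_bounded_clinear[OF \<open>B \<in> M\<close>]])
  then show "W (?C (Z x)) = W (?C x)"
    using central_projections_commute[OF W C] central_projections_commute[OF Z W] by metis
qed

lemma central_supports_orthogonal:
  assumes A: "A \<in> M" and B: "B \<in> M" and AMB: "\<And>X x. X \<in> M \<Longrightarrow> A (X (B x)) = 0"
  shows "central_support M A (central_support M B x) = 0"
proof -
  define V where "V = {z. \<forall>X\<in>M. A (X z) = 0}"
  have "V = \<Inter>{{z. A (X z) = 0} | X. X \<in> M}" by (auto simp: V_def)
  also have "closed_csubspace \<dots>"
  proof (rule closed_csubspace_Inter)
    fix U assume "U \<in> {{z. A (X z) = 0} | X. X \<in> M}"
    then obtain X where "X \<in> M" "U = {z. A (X z) = 0}" by blast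
    then show "closed_csubspace U"
      using closed_csubspace_kernel[OF bounded_clinear_mem[OF compose_closed[OF A \<open>X \<in> M\<close>]]] by simp
  qed
  finally have "closed_csubspace V" .
  have "central_support M B y \<in> V" for y
  proof (rule central_support_mem[OF B \<open>closed_csubspace V\<close>])
    fix Y z assume "Y \<in> M"
    then show "Y (B z) \<in> V" using AMB[OF compose_closed] by (simp add: V_def)
  qed
  then have "A (central_support M B y) = 0" for y unfolding V_def using ident_closed by fastforce
  then show ?thesis
    using central_commute[OF central_support_central[OF B] A]
    by (intro central_support_annihilated[OF A central_support_central[OF B]]) metis
qed

lemma central_annihilator_of_corner:
  assumes W: "central_projection M W" and "A \<in> M" "B \<in> M"
    and "\<And>X x. X \<in> M \<Longrightarrow> W (A (X (B x))) = 0"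
  shows "W (central_support M A (central_support M B x)) = 0"
proof -
  have "(\<lambda>y. W (A y)) \<in> M" by (rule compose_closed[OF central_projection_mem[OF W] \<open>A \<in> M\<close>])
  then have "central_support M (\<lambda>y. W (A y)) (central_support M B x) = 0"
    using \<open>B \<in> M\<close> assms(4) by (rule central_supports_orthogonal)
  then show ?thesis unfolding central_support_central_mult[OF W \<open>A \<in> M\<close>] .
qed

lemma central_supports_orthogonalI:
  assumes S: "S \<in> M" and R: "R \<in> M" and W: "central_projection M W"
    and "\<And>x. W (S x) = S x" and "\<And>x. W (R x) = 0"
  shows "central_support M S (central_support M R x) = 0"
proof -
  have "central_support M S (central_support M R x)
      = central_support M S (W (central_support M R x))"
    using central_support_least[OF S W assms(4)] by simp
  also have "W (central_support M R x) = central_support M R (W x)"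
    by (rule central_projections_commute[OF W central_support_central[OF R]])
  also have "central_support M R (W x) = 0"
    by (rule central_support_annihilated[OF R W assms(5)])
  finally show ?thesis by (simp add: clinear_zero[OF central_support_bounded_clinear[OF S]])
qed

end

section \<open>Orthogonal families of contractions in a corner\<close>

definition corner_contraction ::
    "('a::chilbert \<Rightarrow> 'a) set \<Rightarrow> ('a \<Rightarrow> 'a) \<Rightarrow> ('a \<Rightarrow> 'a) \<Rightarrow> ('a \<Rightarrow> 'a) \<Rightarrow> bool" where
  "corner_contraction M P Q S \<longleftrightarrow> S \<in> corner P M Q \<and> (\<forall>x. norm (S x) \<le> norm x)"

definition centrally_orthogonal :: "('a::chilbert \<Rightarrow> 'a) set \<Rightarrow> ('a \<Rightarrow> 'a) \<Rightarrow> ('a \<Rightarrow> 'a) \<Rightarrow> bool" where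
  "centrally_orthogonal M S R \<longleftrightarrow> (\<forall>x. central_support M S (central_support M R x) = 0)"

definition admissible_family ::
    "('a::chilbert \<Rightarrow> 'a) set \<Rightarrow> ('a \<Rightarrow> 'a) \<Rightarrow> ('a \<Rightarrow> 'a) \<Rightarrow> ('a \<Rightarrow> 'a) \<Rightarrow> ('a \<Rightarrow> 'a) set \<Rightarrow> bool"
  where
  "admissible_family M P Q T F \<longleftrightarrow>
     (\<forall>S\<in>F. corner_contraction M P Q S \<and> centrally_orthogonal M S T) \<and>
     (\<forall>S\<in>F. \<forall>S'\<in>F. S \<noteq> S' \<longrightarrow> centrally_orthogonal M S S')"

context vn_algebra
begin

lemma corner_iff:
  assumes P: "is_projection M P" and Q: "is_projection M Q"
  shows "S \<in> corner P M Q \<longleftrightarrow> S \<in> M \<and> (\<forall>x. P (S (Q x)) = S x)"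
proof
  assume "S \<in> corner P M Q"
  then obtain X where "X \<in> M" and S: "S = (\<lambda>x. P (X (Q x)))" by (auto simp: corner_def o_def)
  then have "S \<in> M"
    using compose_closed[OF is_projection_mem[OF P] compose_closed[OF _ is_projection_mem[OF Q]]] by simp
  then show "S \<in> M \<and> (\<forall>x. P (S (Q x)) = S x)" using P Q by (simp add: S is_projection_idem)
next
  assume "S \<in> M \<and> (\<forall>x. P (S (Q x)) = S x)"
  then show "S \<in> corner P M Q" unfolding corner_def by (auto intro!: exI[of _ S] simp: fun_eq_iff)
qed

lemma centrally_orthogonal_sym:
  "S \<in> M \<Longrightarrow> R \<in> M \<Longrightarrow> centrally_orthogonal M S R \<Longrightarrow> centrally_orthogonal M R S"
  unfolding centrally_orthogonal_def
  using central_projections_commute[OF central_support_central central_support_central] by metis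

lemma maximal_admissible_family_exists:
  assumes P: "is_projection M P" and Q: "is_projection M Q"
  shows "\<exists>F. admissible_family M P Q T F \<and>
    (\<forall>S. corner_contraction M P Q S \<longrightarrow> centrally_orthogonal M S T \<longrightarrow>
      (\<forall>S'\<in>F. centrally_orthogonal M S S') \<longrightarrow> S \<in> F)"
proof -
  let ?Fam = "{F. admissible_family M P Q T F}"
  have "\<exists>F\<in>?Fam. \<forall>G\<in>?Fam. F \<subseteq> G \<longrightarrow> G = F"
  proof (rule Zorn_Lemma, rule ballI)
    fix Ch assume Ch: "Ch \<in> chains ?Fam"
    have "centrally_orthogonal M S S'" if S: "S \<in> \<Union>Ch" and S': "S' \<in> \<Union>Ch" and "S \<noteq> S'"
      for S S'
    proof -
      obtain A B where "A \<in> Ch" "B \<in> Ch" "S \<in> A" "S' \<in> B" using S S' by blast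
      moreover have "A \<subseteq> B \<or> B \<subseteq> A" using chainsD[OF Ch] \<open>A \<in> Ch\<close> \<open>B \<in> Ch\<close> by blast
      ultimately obtain G where "G \<in> Ch" "S \<in> G" "S' \<in> G" by blast
      then show ?thesis using chainsD2[OF Ch] \<open>S \<noteq> S'\<close> by (auto simp: admissible_family_def)
    qed
    moreover have "corner_contraction M P Q S \<and> centrally_orthogonal M S T" if "S \<in> \<Union>Ch" for S
      using that chainsD2[OF Ch] by (auto simp: admissible_family_def)
    ultimately show "\<Union>Ch \<in> ?Fam" by (simp add: admissible_family_def)
  qed
  then obtain F where F: "admissible_family M P Q T F"
    and max: "\<And>G. admissible_family M P Q T G \<Longrightarrow> F \<subseteq> G \<Longrightarrow> G = F"
    by blast
  have "S \<in> F" if S: "corner_contraction M P Q S" "centrally_orthogonal M S T"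
    and SF: "\<forall>S'\<in>F. centrally_orthogonal M S S'" for S
  proof -
    have mem: "S' \<in> M" if "corner_contraction M P Q S'" for S'
      using that corner_iff[OF P Q] by (simp add: corner_contraction_def)
    have "centrally_orthogonal M S' S" if "S' \<in> F" for S'
      using that F SF S(1) mem centrally_orthogonal_sym by (auto simp: admissible_family_def)
    then have "admissible_family M P Q T (insert S F)"
      using F S SF by (auto simp: admissible_family_def)
    then show "S \<in> F" using max by blast
  qed
  with F show ?thesis by blast
qed

lemma corner_contraction_below:
  assumes P: "is_projection M P" and Q: "is_projection M Q" and W: "central_projection M W"
    and "X \<in> M" and nonzero: "W (P (X (Q x0))) \<noteq> 0"
  obtains S where "corner_contraction M P Q S" "\<And>x. W (S x) = S x" "S x0 \<noteq> 0"
proof -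
  define S0 where "S0 = (\<lambda>y. W (P (X (Q y))))"
  have "S0 \<in> M" unfolding S0_def
    by (intro compose_closed[OF central_projection_mem[OF W]] compose_closed[OF is_projection_mem[OF P]]
        compose_closed[OF \<open>X \<in> M\<close> is_projection_mem[OF Q]])
  then have bl: "bounded_linear S0" by (simp add: bounded_clinear_mem bounded_clinear_linear)
  then have "onorm S0 > 0" using nonzero onorm_pos_lt by (auto simp: S0_def)
  define S where "S = (\<lambda>y. scaleR (1 / onorm S0) (S0 y))"
  show thesis
  proof (rule that)
    have "S \<in> M" unfolding S_def by (rule scaleR_closed[OF \<open>S0 \<in> M\<close>])
    moreover have "P (S (Q y)) = S y" for y
      using central_commute[OF W is_projection_mem[OF P]] is_projection_idem[OF P] is_projection_idem[OF Q]
      by (simp add: S_def S0_def clinear_scaleR[OF is_projection_bounded_clinear[OF P]])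
    moreover have "norm (S y) \<le> norm y" for y
      using onorm[OF bl, of y] \<open>onorm S0 > 0\<close> by (simp add: S_def field_simps)
    ultimately show "corner_contraction M P Q S"
      by (simp add: corner_contraction_def corner_iff[OF P Q])
    show "W (S x) = S x" for x
      using central_projection_idem[OF W]
      by (simp add: S_def S0_def clinear_scaleR[OF central_projection_bounded_clinear[OF W]])
    show "S x0 \<noteq> 0" using nonzero \<open>onorm S0 > 0\<close> by (simp add: S_def S0_def)
  qed
qed

lemma central_support_corner_le:
  assumes P: "is_projection M P" and Q: "is_projection M Q" and "Y \<in> corner P M Q"
  shows "central_support M Y (central_support M P (central_support M Q x)) = central_support M Y x"
proof -
  have Y: "Y \<in> M" "\<And>x. P (Y (Q x)) = Y x" using assms(3) corner_iff[OF P Q] by auto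
  let ?CP = "central_support M P" and ?CQ = "central_support M Q"
  have CP: "central_projection M ?CP" and CQ: "central_projection M ?CQ"
    using P Q by (simp_all add: central_support_central is_projection_mem)
  have "?CP (?CQ (Y x)) = Y x" for x
  proof -
    have "?CP (?CQ (Y x)) = ?CP (?CQ (P (Y (Q x))))" by (simp only: Y(2))
    also have "\<dots> = ?CP (P (Y (?CQ (Q x))))"
      using central_commute[OF CQ is_projection_mem[OF P]] central_commute[OF CQ Y(1)] by metis
    also have "\<dots> = P (Y (Q x))"
      using central_support_fixes[OF is_projection_mem[OF P]] central_support_fixes[OF is_projection_mem[OF Q]]
      by metis
    finally show ?thesis by (simp only: Y(2))
  qed
  then show ?thesis by (intro central_support_least[OF Y(1) central_projection_compose[OF CP CQ]])
qed

end

locale corner_family = vn_algebra M for M :: "('a::chilbert \<Rightarrow> 'a) set" +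
  fixes P Q T :: "'a \<Rightarrow> 'a" and F :: "('a \<Rightarrow> 'a) set"
  assumes P: "is_projection M P" and Q: "is_projection M Q" and T: "T \<in> corner P M Q"
    and admissible: "admissible_family M P Q T F"
begin

lemma T_mem: "T \<in> M" and T_corner: "P (T (Q x)) = T x"
  using T corner_iff[OF P Q] by auto

lemma
  assumes "S \<in> F"
  shows family_mem: "S \<in> M"
    and family_corner: "P (S (Q x)) = S x"
    and family_contraction: "norm (S x) \<le> norm x"
    and family_orthogonal_T: "central_support M S (central_support M T x) = 0"
  using assms admissible corner_iff[OF P Q]
  by (auto simp: admissible_family_def corner_contraction_def centrally_orthogonal_def)

lemma family_orthogonal:
  "S \<in> F \<Longrightarrow> S' \<in> F \<Longrightarrow> S \<noteq> S' \<Longrightarrow> central_support M S (central_support M S' x) = 0"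
  using admissible by (auto simp: admissible_family_def centrally_orthogonal_def)

lemma family_left_fixed: "S \<in> F \<Longrightarrow> P (S x) = S x"
  using family_corner is_projection_idem[OF P] by metis

lemma family_right_fixed: "S \<in> F \<Longrightarrow> S (Q x) = S x"
  using family_corner is_projection_idem[OF Q] by metis

lemma central_support_family_orthogonal:
  "S \<in> F \<Longrightarrow> S' \<in> F \<Longrightarrow> S \<noteq> S' \<Longrightarrow>
    cinner (central_support M S x) (central_support M S' y) = 0"
  using central_projection_self_adjoint[OF central_support_central[OF family_mem]] family_orthogonal
  by (metis cinner_zero_right)

lemma family_range_orthogonal: "S \<in> F \<Longrightarrow> S' \<in> F \<Longrightarrow> S \<noteq> S' \<Longrightarrow> cinner (S x) (S' y) = 0"
  using central_support_family_orthogonal central_support_fixes[OF family_mem] by metis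

lemma norm_family_le_central_support: "S \<in> F \<Longrightarrow> norm (S x) \<le> norm (central_support M S x)"
  using family_contraction central_support_fixes[OF family_mem]
    central_commute[OF central_support_central[OF family_mem] family_mem] by metis

lemma bessel_inequality:
  assumes H: "finite H" "H \<subseteq> F"
  shows "(\<Sum>S\<in>H. (norm (central_support M S x))\<^sup>2) \<le> (norm x)\<^sup>2"
proof -
  define u where "u = (\<Sum>S\<in>H. central_support M S x)"
  have norm_u: "(norm u)\<^sup>2 = (\<Sum>S\<in>H. (norm (central_support M S x))\<^sup>2)"
    unfolding u_def by (rule pythagoras_sum[OF H(1)]) (meson H(2) central_support_family_orthogonal subsetD)
  have "cinner (central_support M S x) x = complex_of_real ((norm (central_support M S x))\<^sup>2)"
    if "S \<in> F" for S
    using central_projection_idem[OF central_support_central[OF family_mem[OF that]]]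
      central_projection_self_adjoint[OF central_support_central[OF family_mem[OF that]]]
    by (metis cinner_self)
  then have "cinner u x = complex_of_real (\<Sum>S\<in>H. (norm (central_support M S x))\<^sup>2)"
    unfolding u_def cinner_sum_left using H by (simp add: subset_iff)
  then have "(norm u)\<^sup>2 = Re (cinner u x)" using norm_u by simp
  also have "\<dots> \<le> norm u * norm x" by (rule Re_cinner_le_norm)
  finally have "norm u \<le> norm x"
    by (cases "u = 0") (auto simp: power2_eq_square mult_le_cancel_left_pos)
  then show ?thesis using norm_u by (metis norm_ge_zero power_mono)
qed

lemma power2_norm_family_partial_sum_le:
  assumes H: "finite H" "H \<subseteq> F"
  shows "(norm (\<Sum>S\<in>H. S x))\<^sup>2 \<le> (\<Sum>S\<in>H. (norm (central_support M S x))\<^sup>2)"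
proof -
  have "(norm (\<Sum>S\<in>H. S x))\<^sup>2 = (\<Sum>S\<in>H. (norm (S x))\<^sup>2)"
    by (rule pythagoras_sum[OF H(1)]) (meson H(2) family_range_orthogonal subsetD)
  also have "\<dots> \<le> (\<Sum>S\<in>H. (norm (central_support M S x))\<^sup>2)"
    using H norm_family_le_central_support by (intro sum_mono power_mono) auto
  finally show ?thesis .
qed

end


lemma summable_on_Cauchy_criterion:
  fixes f :: "'i \<Rightarrow> 'b::banach"
  assumes tail: "\<And>e. e > 0 \<Longrightarrow> \<exists>F0. finite F0 \<and> F0 \<subseteq> A \<and>
      (\<forall>H. finite H \<longrightarrow> H \<subseteq> A - F0 \<longrightarrow> norm (sum f H) < e)"
  shows "f summable_on A"
proof -
  have "\<exists>P. eventually P (finite_subsets_at_top A) \<and>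
      (\<forall>F1 F2. P F1 \<and> P F2 \<longrightarrow> dist (sum f F1) (sum f F2) < e)" if "e > 0" for e
  proof -
    obtain F0 where F0: "finite F0" "F0 \<subseteq> A"
      and small: "\<And>H. finite H \<Longrightarrow> H \<subseteq> A - F0 \<Longrightarrow> norm (sum f H) < e/2"
      using tail[of "e/2"] \<open>e > 0\<close> by auto
    define P where "P F \<longleftrightarrow> finite F \<and> F0 \<subseteq> F \<and> F \<subseteq> A" for F
    have "eventually P (finite_subsets_at_top A)"
      unfolding eventually_finite_subsets_at_top P_def using F0 by blast
    moreover have "dist (sum f F1) (sum f F2) < e" if "P F1" "P F2" for F1 F2
    proof -
      have "sum f F1 = sum f F0 + sum f (F1 - F0)" "sum f F2 = sum f F0 + sum f (F2 - F0)"
        using that unfolding P_def by (metis add.commute sum.subset_diff)+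
      then have "dist (sum f F1) (sum f F2) \<le> norm (sum f (F1 - F0)) + norm (sum f (F2 - F0))"
        by (simp add: dist_norm norm_triangle_ineq4)
      also have "\<dots> < e/2 + e/2"
        using that small[of "F1 - F0"] small[of "F2 - F0"] unfolding P_def
        by (intro add_strict_mono) auto
      finally show ?thesis by simp
    qed
    ultimately show ?thesis by blast
  qed
  then have "cauchy_filter (filtermap (sum f) (finite_subsets_at_top A))"
    by (simp add: cauchy_filter_metric_filtermap)
  moreover have "complete (UNIV::'b set)"
    by (meson Cauchy_convergent UNIV_I complete_def convergent_def)
  ultimately obtain L where "(sum f \<longlongrightarrow> L) (finite_subsets_at_top A)"
    using complete_uniform[where S=UNIV] by (force simp add: filterlim_def)
  then show ?thesis using summable_on_def has_sum_def by blast
qed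

context corner_family
begin

lemma family_summable: "(\<lambda>S. S x) summable_on F"
proof (rule summable_on_Cauchy_criterion)
  fix e :: real assume "e > 0"
  define g where "g S = (norm (central_support M S x))\<^sup>2" for S
  \<comment> \<open>by Bessel's inequality the sums of \<open>g\<close> are bounded, so their tails become small\<close>
  define L where "L = (SUP H\<in>{H. finite H \<and> H \<subseteq> F}. sum g H)"
  have bdd: "bdd_above (sum g ` {H. finite H \<and> H \<subseteq> F})"
    by (rule bdd_aboveI[where M="(norm x)\<^sup>2"]) (auto simp: g_def bessel_inequality)
  have le_L: "sum g H \<le> L" if "finite H" "H \<subseteq> F" for H
    unfolding L_def by (rule cSUP_upper[OF _ bdd]) (use that in auto)
  have "L - e\<^sup>2 < L" using \<open>e > 0\<close> by simp
  then obtain H0 where H0: "finite H0" "H0 \<subseteq> F" "L - e\<^sup>2 < sum g H0"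
    unfolding L_def by (subst (asm) less_cSUP_iff[OF _ bdd]) auto
  have "norm (\<Sum>S\<in>H. S x) < e" if H: "finite H" "H \<subseteq> F - H0" for H
  proof -
    have "sum g H0 + sum g H = sum g (H0 \<union> H)"
      using H H0 by (intro sum.union_disjoint[symmetric]) auto
    also have "\<dots> \<le> L" using H H0 by (intro le_L) auto
    moreover have "(norm (\<Sum>S\<in>H. S x))\<^sup>2 \<le> sum g H"
      unfolding g_def using H by (intro power2_norm_family_partial_sum_le) auto
    ultimately have "(norm (\<Sum>S\<in>H. S x))\<^sup>2 < e\<^sup>2" using H0(3) by linarith
    then show ?thesis using \<open>e > 0\<close> by (simp add: power_less_imp_less_base)
  qed
  then show "\<exists>F0. finite F0 \<and> F0 \<subseteq> F \<and> (\<forall>H. finite H \<longrightarrow> H \<subseteq> F - F0 \<longrightarrow> norm (\<Sum>S\<in>H. S x) < e)"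
    using H0 by blast
qed

definition family_sum :: "'a \<Rightarrow> 'a" where
  "family_sum x = infsum (\<lambda>S. S x) F"

lemma has_sum_family_sum: "((\<lambda>S. S x) has_sum family_sum x) F"
  unfolding family_sum_def using family_summable by simp

lemma has_sum_family_sum_bounded_linear:
  "bounded_linear h \<Longrightarrow> ((\<lambda>S. h (S x)) has_sum h (family_sum x)) F"
  using has_sum_bounded_linear[OF _ has_sum_family_sum] by blast

lemma family_sum_eqI: "((\<lambda>S. S x) has_sum y) F \<Longrightarrow> family_sum x = y"
  using has_sum_family_sum has_sum_unique by blast

lemma norm_family_sum_le: "norm (family_sum x) \<le> norm x"
proof -
  have "((\<lambda>H. norm (\<Sum>S\<in>H. S x)) \<longlongrightarrow> norm (family_sum x)) (finite_subsets_at_top F)"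
    using has_sum_family_sum[of x] unfolding has_sum_def by (intro tendsto_norm)
  moreover have "\<forall>\<^sub>F H in finite_subsets_at_top F. norm (\<Sum>S\<in>H. S x) \<le> norm x"
  proof (intro eventually_finite_subsets_at_top_weakI)
    fix H assume "finite H" "H \<subseteq> F"
    then have "(norm (\<Sum>S\<in>H. S x))\<^sup>2 \<le> (norm x)\<^sup>2"
      using power2_norm_family_partial_sum_le bessel_inequality by (meson order_trans)
    then show "norm (\<Sum>S\<in>H. S x) \<le> norm x" by (simp add: power2_le_iff_abs_le)
  qed
  ultimately show ?thesis by (rule tendsto_upperbound) simp
qed

lemma bounded_clinear_family_sum: "bounded_clinear family_sum"
proof -
  have "family_sum (x + y) = family_sum x + family_sum y" for x y
    by (rule family_sum_eqI, rule has_sum_cong[THEN iffD1, OF _ has_sum_add[OF has_sum_family_sum has_sum_family_sum]])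
      (simp add: clinear_add bounded_clinear_mem family_mem)
  moreover have "family_sum (scaleC c x) = scaleC c (family_sum x)" for c x
    by (rule family_sum_eqI, rule has_sum_cong[THEN iffD1, OF _ has_sum_family_sum_bounded_linear[OF bounded_linear_scaleC]])
      (simp add: clinear_scaleC bounded_clinear_mem family_mem)
  ultimately show ?thesis unfolding bounded_clinear_def
    by (intro conjI allI bounded_linear_intro[where K=1])
      (simp_all add: scaleR_scaleC norm_family_sum_le)
qed

lemma family_sum_mem: "family_sum \<in> M"
proof (rule memI[OF bounded_clinear_family_sum])
  fix B x assume B: "B \<in> commutant M"
  show "family_sum (B x) = B (family_sum x)"
    by (rule family_sum_eqI, rule has_sum_cong[THEN iffD1, OF _ has_sum_family_sum_bounded_linear])
      (simp_all add: commute_with_commutant[OF family_mem B] bounded_clinear_linear commutant_bounded_clinear[OF B])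
qed

lemma family_sum_left_fixed: "P (family_sum x) = family_sum x"
  by (rule sym, rule family_sum_eqI, rule has_sum_cong[THEN iffD1, OF _ has_sum_family_sum_bounded_linear])
    (simp_all add: family_left_fixed bounded_clinear_linear is_projection_bounded_clinear[OF P])

lemma family_sum_right_fixed: "family_sum (Q x) = family_sum x"
  by (rule family_sum_eqI, rule has_sum_cong[THEN iffD1, OF _ has_sum_family_sum]) (simp add: family_right_fixed)

lemma central_support_family_sum:
  assumes "S0 \<in> F" shows "central_support M S0 (family_sum x) = S0 x"
proof -
  have "((\<lambda>S. central_support M S0 (S x)) has_sum central_support M S0 (family_sum x)) F"
    by (intro has_sum_family_sum_bounded_linear bounded_clinear_linear central_support_bounded_clinear
        family_mem assms)
  moreover have "central_support M S0 (S x) = (if S = S0 then S0 x else 0)" if "S \<in> F" for S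
  proof (cases "S = S0")
    case False
    then show ?thesis
      using family_orthogonal[OF assms that] central_support_fixes[OF family_mem[OF that], of x]
      by (metis (no_types))
  qed (simp add: central_support_fixes[OF family_mem[OF assms]])
  ultimately have "((\<lambda>S. if S = S0 then S0 x else 0) has_sum central_support M S0 (family_sum x)) F"
    by (subst (asm) has_sum_cong) auto
  moreover have "((\<lambda>S. if S = S0 then S0 x else 0) has_sum S0 x) F"
    using assms by (intro has_sum_finite_neutralI[where B="{S0}"]) auto
  ultimately show ?thesis using has_sum_unique by blast
qed

lemma central_support_T_family_sum: "central_support M T (family_sum x) = 0"
proof -
  have "((\<lambda>S. central_support M T (S x)) has_sum central_support M T (family_sum x)) F"
    by (intro has_sum_family_sum_bounded_linear bounded_clinear_linear central_support_bounded_clinear T_mem)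
  moreover have "((\<lambda>S. central_support M T (S x)) has_sum 0) F"
  proof (rule has_sum_0)
    fix S assume "S \<in> F"
    have "central_support M T (S x) = central_support M T (central_support M S (S x))"
      by (simp add: central_support_fixes[OF family_mem[OF \<open>S \<in> F\<close>]])
    also have "\<dots> = central_support M S (central_support M T (S x))"
      by (rule central_projections_commute[OF central_support_central[OF T_mem]
            central_support_central[OF family_mem[OF \<open>S \<in> F\<close>]]])
    also have "\<dots> = 0" by (rule family_orthogonal_T[OF \<open>S \<in> F\<close>])
    finally show "central_support M T (S x) = 0" .
  qed
  ultimately show ?thesis by (rule has_sum_unique)
qed

end


section \<open>Perturbing into full central support\<close>

context corner_family
begin

lemma perturbation_mem_corner: "(\<lambda>x. T x + scaleR \<delta> (family_sum x)) \<in> corner P M Q"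
  unfolding corner_iff[OF P Q]
  using T_mem T_corner family_sum_mem family_sum_left_fixed family_sum_right_fixed
  by (simp add: add_closed scaleR_closed clinear_add clinear_scaleR is_projection_bounded_clinear[OF P])

lemma central_support_T_perturbation:
  "central_support M T (T x + scaleR \<delta> (family_sum x)) = T x"
  by (simp add: clinear_add clinear_scaleR central_support_bounded_clinear[OF T_mem]
      central_support_T_family_sum central_support_fixes[OF T_mem])

lemma central_support_family_perturbation:
  assumes "S \<in> F"
  shows "central_support M S (T x + scaleR \<delta> (family_sum x)) = scaleR \<delta> (S x)"
proof -
  have "central_support M S (T x) = central_support M S (central_support M T (T x))"
    by (simp only: central_support_fixes[OF T_mem])
  also have "\<dots> = 0" by (rule family_orthogonal_T[OF assms])
  finally show ?thesis
    by (simp add: clinear_add clinear_scaleR central_support_bounded_clinear[OF family_mem[OF assms]]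
        central_support_family_sum[OF assms])
qed

lemma central_projection_annihilating_family:
  assumes maximal: "\<And>S. corner_contraction M P Q S \<Longrightarrow> centrally_orthogonal M S T \<Longrightarrow>
      \<forall>S'\<in>F. centrally_orthogonal M S S' \<Longrightarrow> S \<in> F"
    and G: "central_projection M G" and GT: "\<And>x. G (T x) = 0"
    and GF: "\<And>S x. S \<in> F \<Longrightarrow> G (S x) = 0"
  shows "G (central_support M P (central_support M Q x)) = 0"
proof (rule central_annihilator_of_corner[OF G is_projection_mem[OF P] is_projection_mem[OF Q]])
  fix X x0 assume "X \<in> M"
  show "G (P (X (Q x0))) = 0"
  proof (rule ccontr)
    assume "G (P (X (Q x0))) \<noteq> 0"
    then obtain S where S: "corner_contraction M P Q S" and GS: "\<And>x. G (S x) = S x" and "S x0 \<noteq> 0"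
      using corner_contraction_below[OF P Q G \<open>X \<in> M\<close>] by blast
    have "S \<in> M" using S corner_iff[OF P Q] by (simp add: corner_contraction_def)
    \<comment> \<open>\<open>S\<close> lives under \<open>G\<close>, which is orthogonal to \<open>T\<close> and to the whole family\<close>
    have "centrally_orthogonal M S T"
      unfolding centrally_orthogonal_def
      using central_supports_orthogonalI[OF \<open>S \<in> M\<close> T_mem G GS GT] by blast
    moreover have "centrally_orthogonal M S S'" if "S' \<in> F" for S'
      unfolding centrally_orthogonal_def
      using central_supports_orthogonalI[OF \<open>S \<in> M\<close> family_mem[OF that] G GS GF[OF that]] by blast
    ultimately have "S \<in> F" using maximal[OF S] by blast
    then show False using GF GS \<open>S x0 \<noteq> 0\<close> by metis
  qed
qed

lemma central_support_perturbation:
  assumes maximal: "\<And>S. corner_contraction M P Q S \<Longrightarrow> centrally_orthogonal M S T \<Longrightarrow>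
      \<forall>S'\<in>F. centrally_orthogonal M S S' \<Longrightarrow> S \<in> F"
    and "\<delta> > 0"
  shows "central_support M (\<lambda>x. T x + scaleR \<delta> (family_sum x))
    = central_support M P \<circ> central_support M Q"
proof -
  define Y where "Y = (\<lambda>x. T x + scaleR \<delta> (family_sum x))"
  have Y: "Y \<in> corner P M Q" unfolding Y_def by (rule perturbation_mem_corner)
  then have "Y \<in> M" by (simp add: corner_iff[OF P Q])
  let ?C = "central_support M"
  define Z where "Z = (\<lambda>x. ?C P (?C Q x))"
  have Z: "central_projection M Z" unfolding Z_def
    by (rule central_projection_compose[OF central_support_central central_support_central])
      (rule is_projection_mem[OF P], rule is_projection_mem[OF Q])
  have CY: "central_projection M (?C Y)" by (rule central_support_central[OF \<open>Y \<in> M\<close>])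
  define G where "G = (\<lambda>x. Z (x - ?C Y x))"
  have G: "central_projection M G" unfolding G_def
    by (rule central_projection_compose[OF Z central_projection_complement[OF CY]])
  have GY: "G (Y x) = 0" for x
    using central_support_fixes[OF \<open>Y \<in> M\<close>] clinear_zero[OF central_projection_bounded_clinear[OF Z]]
    by (simp add: G_def)
  have G_support: "G (?C A (Y x)) = 0" if "A \<in> M" for A x
    using GY by (simp add: central_projections_commute[OF G central_support_central[OF that]]
        clinear_zero[OF central_support_bounded_clinear[OF that]])
  have "G (T x) = 0" for x
    using G_support[OF T_mem, of x] by (simp add: Y_def central_support_T_perturbation)
  moreover have "G (S x) = 0" if "S \<in> F" for S x
    using G_support[OF family_mem[OF that], of x] \<open>\<delta> > 0\<close>
    by (simp add: Y_def central_support_family_perturbation[OF that]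
        clinear_scaleR[OF central_projection_bounded_clinear[OF G]])
  ultimately have GZ: "G (Z x) = 0" for x
    using central_projection_annihilating_family[OF maximal G] unfolding Z_def by blast
  have "Z x = ?C Y x" for x
  proof -
    have "Z x = G (Z x) + Z (?C Y (Z x))"
      unfolding G_def
      by (simp add: clinear_diff[OF central_projection_bounded_clinear[OF Z]] central_projection_idem[OF Z])
    also have "\<dots> = ?C Y (Z x)"
      using GZ[of x] central_projections_commute[OF Z CY, of "Z x"] central_projection_idem[OF Z, of x]
      by simp
    also have "\<dots> = ?C Y x" unfolding Z_def by (rule central_support_corner_le[OF P Q Y])
    finally show ?thesis .
  qed
  then have "?C Y = ?C P \<circ> ?C Q" by (simp add: Z_def fun_eq_iff)
  then show ?thesis by (simp only: Y_def)
qed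

end

theorem mainTheorem5:
  fixes M :: "('h::chilbert \<Rightarrow> 'h) set" and P Q T :: "'h \<Rightarrow> 'h" and \<epsilon> :: real
  assumes "von_neumann_algebra M"
    and "is_projection M P" and "is_projection M Q"
    and "T \<in> corner P M Q"
    and "\<epsilon> > 0"
  shows "\<exists>Y\<in>corner P M Q. onorm (\<lambda>x. T x - Y x) < \<epsilon> \<and>
           central_support M Y = central_support M P \<circ> central_support M Q"
proof -
  interpret vn_algebra M by (rule vn_algebra.intro) fact
  obtain F where "admissible_family M P Q T F"
    and maximal: "\<And>S. corner_contraction M P Q S \<Longrightarrow> centrally_orthogonal M S T \<Longrightarrow>
      \<forall>S'\<in>F. centrally_orthogonal M S S' \<Longrightarrow> S \<in> F"
    using maximal_admissible_family_exists[OF assms(2,3)] by blast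
  interpret corner_family M P Q T F by unfold_locales fact+
  define Y where "Y = (\<lambda>x. T x + scaleR (\<epsilon> / 2) (family_sum x))"
  have "onorm (\<lambda>x. T x - Y x) \<le> \<epsilon> / 2"
    using \<open>\<epsilon> > 0\<close> norm_family_sum_le by (intro onorm_bound) (simp_all add: Y_def)
  then have "onorm (\<lambda>x. T x - Y x) < \<epsilon>" using \<open>\<epsilon> > 0\<close> by linarith
  moreover have "Y \<in> corner P M Q" unfolding Y_def by (rule perturbation_mem_corner)
  moreover have "central_support M Y = central_support M P \<circ> central_support M Q"
    unfolding Y_def using maximal \<open>\<epsilon> > 0\<close> by (intro central_support_perturbation) simp_all
  ultimately show ?thesis by blast
qed

end
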